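(* Let $\alpha=\frac{p}{q}$ with $q\ge1$, $\gcd(p,q)=1$. Then (1) $\mathcal{F}_qR_{\theta_+}=R_0\mathcal{F}_q$; (2) $\mathcal{F}_q\Delta^{\mathrm{per}}_q=D_{q,0}\mathcal{F}_q$; (3) $\mathcal{F}_qD_{q,\theta_+}=\Delta^{\mathrm{anti}}_q\mathcal{F}_q$.
   Context: $\mathcal{V}^{\mathrm{per}}_q$ (resp. $\mathcal{V}^{\mathrm{anti}}_q$) is the $q$-dimensional space of sequences $\psi:\mathbb{Z}\to\mathbb{C}$ with $\psi_{n+q}=\psi_n$ (resp. $\psi_{n+q}=-\psi_n$). $\theta_+=\alpha/2$ if $p$ is odd and $\theta_+=(1+\alpha)/2$ if $p$ is even. For $j\in\mathbb{Z}/q\mathbb{Z}$, $e_j\in\mathcal{V}^{\mathrm{per}}_q$ is given by $(e_j)_n=1$ if $n\equiv j\pmod q$ and $0$ otherwise, and $f_j\in\mathcal{V}^{\mathrm{anti}}_q$ by $(f_j)_n=\exp(2\pi i(j\alpha+\theta_+)n)$. $\mathcal{F}_q:\mathcal{V}^{\mathrm{per}}_q\to\mathcal{V}^{\mathrm{anti}}_q$ is the linear map with $\mathcal{F}_qe_j=f_j$. $\Delta_q\psi=\mathcal{T}_1\psi+\mathcal{T}_{-1}\psi$ where $(\mathcal{T}_r\psi)_n=\psi_{n-r}$, and $\Delta^{\mathrm{per}}_q$, $\Delta^{\mathrm{anti}}_q$ are its restrictions to $\mathcal{V}^{\mathrm{per}}_q$, $\mathcal{V}^{\mathrm{anti}}_q$.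 $D_{q,\theta}$ is the diagonal operator $(D_{q,\theta}\psi)_n=2\cos(2\pi(\theta+n\alpha))\psi_n$ (here $D_{q,0}$ acts on $\mathcal{V}^{\mathrm{anti}}_q$ and $D_{q,\theta_+}$ on $\mathcal{V}^{\mathrm{per}}_q$). $R_0:(\psi_n)\mapsto(\psi_{-n})$ on $\mathcal{V}^{\mathrm{anti}}_q$ and $R_{\theta_+}:(\psi_n)\mapsto(\psi_{-1-n})$ on $\mathcal{V}^{\mathrm{per}}_q$. *)

theory Defs
  imports Complex_Main
begin

definition alpha :: "int \<Rightarrow> int \<Rightarrow> real" where
  "alpha p q = real_of_int p / real_of_int q"

definition theta_plus :: "int \<Rightarrow> int \<Rightarrow> real" where
  "theta_plus p q = (if odd p then alpha p q / 2 else (1 + alpha p q) / 2)"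

definition per_space :: "int \<Rightarrow> (int \<Rightarrow> complex) set" where
  "per_space q = {\<psi>. \<forall>n. \<psi> (n + q) = \<psi> n}"

definition anti_space :: "int \<Rightarrow> (int \<Rightarrow> complex) set" where
  "anti_space q = {\<psi>. \<forall>n. \<psi> (n + q) = - \<psi> n}"

definition e_vec :: "int \<Rightarrow> int \<Rightarrow> int \<Rightarrow> complex" where
  "e_vec q j n = (if n mod q = j mod q then 1 else 0)"

definition f_vec :: "int \<Rightarrow> int \<Rightarrow> int \<Rightarrow> int \<Rightarrow> complex" where
  "f_vec p q j n =
     exp (2 * of_real pi * \<i> * of_real (real_of_int j * alpha p q + theta_plus p q) * of_int n)"

text \<open>F_q: the linear map with F_q e_j = f_j. Since a periodic psi equals
  the sum over j in {0..<q} of psi_j e_j, F_q psi = sum of psi_j f_j.\<close>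
definition F_q :: "int \<Rightarrow> int \<Rightarrow> (int \<Rightarrow> complex) \<Rightarrow> (int \<Rightarrow> complex)" where
  "F_q p q \<psi> = (\<lambda>n. \<Sum>j\<in>{0..<q}. \<psi> j * f_vec p q j n)"

definition shiftT :: "int \<Rightarrow> (int \<Rightarrow> complex) \<Rightarrow> (int \<Rightarrow> complex)" where
  "shiftT r \<psi> = (\<lambda>n. \<psi> (n - r))"

definition Delta :: "(int \<Rightarrow> complex) \<Rightarrow> (int \<Rightarrow> complex)" where
  "Delta \<psi> = (\<lambda>n. shiftT 1 \<psi> n + shiftT (-1) \<psi> n)"

definition D_op :: "int \<Rightarrow> int \<Rightarrow> real \<Rightarrow> (int \<Rightarrow> complex) \<Rightarrow> (int \<Rightarrow> complex)" where
  "D_op p q \<theta> \<psi> = (\<lambda>n. complex_of_real (2 * cos (2 * pi * (\<theta> + real_of_int n * alpha p q))) * \<psi> n)"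

definition R_zero :: "(int \<Rightarrow> complex) \<Rightarrow> (int \<Rightarrow> complex)" where
  "R_zero \<psi> = (\<lambda>n. \<psi> (- n))"

definition R_theta :: "(int \<Rightarrow> complex) \<Rightarrow> (int \<Rightarrow> complex)" where
  "R_theta \<psi> = (\<lambda>n. \<psi> (- 1 - n))"

end

theory Submission
  imports Defs
begin

text \<open>
  Moving \<open>j\<close> by \<open>\<plusminus>1\<close> multiplies \<open>f\<^sub>j(n)\<close> by \<open>exp(\<plusminus>2\<pi>i n\<alpha>)\<close>, so
  the discrete Laplacian in the index becomes multiplication by \<open>2 cos(2\<pi> n\<alpha>)\<close>; moving
  \<open>n\<close> by \<open>\<plusminus>1\<close> multiplies it by \<open>exp(\<plusminus>2\<pi>i (j\<alpha> + \<theta>\<^sub>+))\<close>, so multiplication by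
  \<open>2 cos(2\<pi>(\<theta>\<^sub>+ + j\<alpha>))\<close> becomes the Laplacian in the site. The choice of \<open>\<theta>\<^sub>+\<close>
  makes \<open>2\<theta>\<^sub>+ - \<alpha>\<close> an integer, so reflecting the index \<open>j \<mapsto> -1 - j\<close> amounts to
  \<open>n \<mapsto> -n\<close>. Since \<open>q\<alpha> = p\<close> is an integer, \<open>f\<^sub>j\<close> is \<open>q\<close>-periodic in \<open>j\<close>, so the sum
  defining \<open>F_q\<close> runs over a full period and may be shifted or reflected.
\<close>

lemma periodic_add_mult:
  fixes g :: "int \<Rightarrow> 'a"
  assumes per: "\<And>x. g (x + q) = g x"
  shows "g (x + k * q) = g x"
proof (induction k rule: int_induct[where k = 0])
  case (step1 i)
  then show ?case using per[of "x + i * q"] by (simp add: algebra_simps)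
next
  case (step2 i)
  then show ?case using per[of "x + (i - 1) * q"] by (simp add: algebra_simps)
qed simp

lemma periodic_mod:
  fixes g :: "int \<Rightarrow> 'a"
  assumes "\<And>x. g (x + q) = g x"
  shows "g (x mod q) = g x"
  using periodic_add_mult[of g q, OF assms, of "x mod q" "x div q"] by simp

lemma sum_periodic_interval:
  fixes g :: "int \<Rightarrow> 'a::comm_monoid_add"
  assumes per: "\<And>x. g (x + q) = g x"
  shows "(\<Sum>j\<in>{a..<a + q}. g j) = (\<Sum>j\<in>{0..<q}. g j)"
proof (cases "q > 0")
  case True
  show ?thesis
  proof (rule sum.reindex_bij_witness[where j = "\<lambda>x. x mod q" and i = "\<lambda>k. a + (k - a) mod q"])
    fix x assume "x \<in> {a..<a + q}"
    then show "a + (x mod q - a) mod q = x"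
      by (simp add: mod_diff_left_eq mod_pos_pos_trivial)
  next
    fix x show "g (x mod q) = g x" by (rule periodic_mod[of g q, OF per])
  qed (use True in \<open>auto simp: mod_simps\<close>)
qed simp

lemma sum_periodic_shift:
  fixes g :: "int \<Rightarrow> 'a::comm_monoid_add"
  assumes "\<And>x. g (x + q) = g x"
  shows "(\<Sum>j\<in>{0..<q}. g (j + c)) = (\<Sum>j\<in>{0..<q}. g j)"
proof -
  have "(\<Sum>j\<in>{0..<q}. g (j + c)) = (\<Sum>j\<in>{c..<c + q}. g j)"
    by (rule sum.reindex_bij_witness[where j = "\<lambda>j. j + c" and i = "\<lambda>k. k - c"]) auto
  also have "\<dots> = (\<Sum>j\<in>{0..<q}. g j)" by (rule sum_periodic_interval[of g q, OF assms])
  finally show ?thesis .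
qed

lemma sum_periodic_reflect:
  fixes g :: "int \<Rightarrow> 'a::comm_monoid_add"
  assumes "\<And>x. g (x + q) = g x"
  shows "(\<Sum>j\<in>{0..<q}. g (c - j)) = (\<Sum>j\<in>{0..<q}. g j)"
proof -
  have "(\<Sum>j\<in>{0..<q}. g (c - j)) = (\<Sum>j\<in>{c - q + 1..<c - q + 1 + q}. g j)"
    by (rule sum.reindex_bij_witness[where j = "\<lambda>j. c - j" and i = "\<lambda>k. c - k"]) auto
  also have "\<dots> = (\<Sum>j\<in>{0..<q}. g j)" by (rule sum_periodic_interval[of g q, OF assms])
  finally show ?thesis .
qed

lemma cis_add_plus_cis_diff: "cis (a + b) + cis (a - b) = complex_of_real (2 * cos b) * cis a"
  by (simp add: cis_mult[symmetric] complex_eq_iff algebra_simps cos_add cos_diff sin_add sin_diff)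

lemma cis_add_int_multiple_2pi: "cis (x + 2 * pi * real_of_int k) = cis x"
  by (simp add: cis_mult[symmetric])

lemma f_vec_eq_cis:
  "f_vec p q j n = cis (2 * pi * (real_of_int j * alpha p q + theta_plus p q) * real_of_int n)"
  unfolding f_vec_def cis_conv_exp by (simp add: algebra_simps)

lemma f_vec_add_period: "f_vec p q (j + q) n = f_vec p q j n"
proof (cases "q = 0")
  case False
  then have "real_of_int q * alpha p q = real_of_int p" by (simp add: alpha_def)
  then have "2 * pi * (real_of_int (j + q) * alpha p q + theta_plus p q) * real_of_int n
      = 2 * pi * (real_of_int j * alpha p q + theta_plus p q) * real_of_int n
        + 2 * pi * real_of_int (p * n)"
    by (simp add: algebra_simps)
  then show ?thesis by (simp only: f_vec_eq_cis cis_add_int_multiple_2pi)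
qed simp

lemma f_vec_reflect: "f_vec p q (- 1 - j) n = f_vec p q j (- n)"
proof -
  have "2 * pi * (real_of_int (- 1 - j) * alpha p q + theta_plus p q) * real_of_int n
      = 2 * pi * (real_of_int j * alpha p q + theta_plus p q) * real_of_int (- n)
        + 2 * pi * real_of_int (if odd p then 0 else n)"
    by (simp add: theta_plus_def algebra_simps)
  then show ?thesis by (simp only: f_vec_eq_cis cis_add_int_multiple_2pi)
qed

lemma f_vec_index_neighbours:
  "f_vec p q (j + 1) n + f_vec p q (j - 1) n
     = complex_of_real (2 * cos (2 * pi * (real_of_int n * alpha p q))) * f_vec p q j n"
  using cis_add_plus_cis_diff[of "2 * pi * (real_of_int j * alpha p q + theta_plus p q) * real_of_int n"
      "2 * pi * (real_of_int n * alpha p q)"]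
  by (simp add: f_vec_eq_cis algebra_simps)

lemma f_vec_site_neighbours:
  "f_vec p q j (n + 1) + f_vec p q j (n - 1)
     = complex_of_real (2 * cos (2 * pi * (theta_plus p q + real_of_int j * alpha p q))) * f_vec p q j n"
  using cis_add_plus_cis_diff[of "2 * pi * (real_of_int j * alpha p q + theta_plus p q) * real_of_int n"
      "2 * pi * (theta_plus p q + real_of_int j * alpha p q)"]
  by (simp add: f_vec_eq_cis algebra_simps)

lemma F_q_R_theta:
  assumes "\<psi> \<in> per_space q"
  shows "F_q p q (R_theta \<psi>) = R_zero (F_q p q \<psi>)"
proof
  fix n
  define g where "g k = \<psi> k * f_vec p q (- 1 - k) n" for k
  have "g (x + q) = g x" for x
  proof -
    have "f_vec p q (- 1 - (x + q)) n = f_vec p q (- 1 - x) n"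
      using f_vec_add_period[of p q "- 1 - (x + q)" n] by simp
    then show ?thesis using assms by (simp add: g_def per_space_def)
  qed
  then have "(\<Sum>j\<in>{0..<q}. g (- 1 - j)) = (\<Sum>j\<in>{0..<q}. g j)"
    by (rule sum_periodic_reflect)
  then show "F_q p q (R_theta \<psi>) n = R_zero (F_q p q \<psi>) n"
    by (simp add: F_q_def R_theta_def R_zero_def g_def f_vec_reflect)
qed

lemma F_q_Delta:
  assumes "\<psi> \<in> per_space q"
  shows "F_q p q (Delta \<psi>) = D_op p q 0 (F_q p q \<psi>)"
proof
  fix n
  define g where "g c k = \<psi> k * f_vec p q (k + c) n" for c k
  have "g c (x + q) = g c x" for c x
  proof -
    have "f_vec p q (x + q + c) n = f_vec p q (x + c) n"
      using f_vec_add_period[of p q "x + c" n] by (simp add: algebra_simps)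
    then show ?thesis using assms by (simp add: g_def per_space_def)
  qed
  then have shift: "(\<Sum>j\<in>{0..<q}. g c (j - c)) = (\<Sum>j\<in>{0..<q}. g c j)" for c
    using sum_periodic_shift[of "g c" q "- c"] by simp
  have "F_q p q (Delta \<psi>) n = (\<Sum>j\<in>{0..<q}. g 1 (j - 1)) + (\<Sum>j\<in>{0..<q}. g (- 1) (j - - 1))"
    by (simp add: F_q_def Delta_def shiftT_def g_def sum.distrib algebra_simps)
  also have "\<dots> = (\<Sum>j\<in>{0..<q}. g 1 j) + (\<Sum>j\<in>{0..<q}. g (- 1) j)"
    by (simp only: shift)
  also have "\<dots> = (\<Sum>j\<in>{0..<q}. \<psi> j * (f_vec p q (j + 1) n + f_vec p q (j - 1) n))"
    by (simp add: g_def sum.distrib[symmetric] distrib_left)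
  also have "\<dots> = D_op p q 0 (F_q p q \<psi>) n"
    by (simp add: f_vec_index_neighbours D_op_def F_q_def sum_distrib_left mult.left_commute)
  finally show "F_q p q (Delta \<psi>) n = D_op p q 0 (F_q p q \<psi>) n" .
qed

lemma F_q_D_op_theta_plus: "F_q p q (D_op p q (theta_plus p q) \<psi>) = Delta (F_q p q \<psi>)"
proof
  fix n
  have "F_q p q (D_op p q (theta_plus p q) \<psi>) n
      = (\<Sum>j\<in>{0..<q}. \<psi> j * (complex_of_real
          (2 * cos (2 * pi * (theta_plus p q + real_of_int j * alpha p q))) * f_vec p q j n))"
    by (simp add: F_q_def D_op_def mult_ac)
  also have "\<dots> = (\<Sum>j\<in>{0..<q}. \<psi> j * (f_vec p q j (n + 1) + f_vec p q j (n - 1)))"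
    by (simp only: f_vec_site_neighbours)
  also have "\<dots> = Delta (F_q p q \<psi>) n"
    by (simp add: F_q_def Delta_def shiftT_def distrib_left sum.distrib add.commute)
  finally show "F_q p q (D_op p q (theta_plus p q) \<psi>) n = Delta (F_q p q \<psi>) n" .
qed

theorem lemmal:
  fixes p q :: int
  assumes "q \<ge> 1" and "coprime p q"
  shows "(\<forall>\<psi>\<in>per_space q. F_q p q (R_theta \<psi>) = R_zero (F_q p q \<psi>))
       \<and> (\<forall>\<psi>\<in>per_space q. F_q p q (Delta \<psi>) = D_op p q 0 (F_q p q \<psi>))
       \<and> (\<forall>\<psi>\<in>per_space q. F_q p q (D_op p q (theta_plus p q) \<psi>) = Delta (F_q p q \<psi>))"
  using F_q_R_theta F_q_Delta F_q_D_op_theta_plus by blast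

end
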